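(* Let $\kappa$ be an uncountable cardinal and let $(G_\alpha:\alpha<\kappa)$ be topological groups, each with more than one element. If ${\sf KH}(\kappa,\aleph_1)$ holds, then $\prod_{\alpha<\kappa}G_\alpha$ (with the product topology) has a Rothberger bounded subset, indeed a Rothberger bounded subgroup, of cardinality $\kappa^+$.
   Context: All topological groups are assumed Tychonoff. A subset $X$ of a topological group $(G,* )$ is Rothberger bounded if for every sequence $(U_n:n<\omega)$ of open neighborhoods of the identity there are $g_n\in G$ with $X\subseteq\bigcup_n g_n*U_n$. For uncountable cardinals $\lambda\le\kappa$, a $(\kappa,\lambda)$ Kurepa family is a family $\mathcal F$ of subsets of $\kappa$ with $|\mathcal F|>\kappa$ such that for every infinite $A\subseteq\kappa$ with $|A|<\lambda$, $|\{X\cap A:X\in\mathcal F\}|\le|A|$. ${\sf KH}(\kappa,\lambda)$ is the statement that a $(\kappa,\lambda)$ Kurepa family exists. *)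

theory Defs
  imports "HOL-Analysis.Analysis" "HOL-Algebra.Product_Groups" "HOL-Algebra.Coset"
begin

unbundle cardinal_syntax

definition topological_group :: "('g, 'm) monoid_scheme \<Rightarrow> 'g topology \<Rightarrow> bool" where
  "topological_group G T \<longleftrightarrow>
     group G \<and> topspace T = carrier G \<and>
     continuous_map (prod_topology T T) T (\<lambda>(x, y). x \<otimes>\<^bsub>G\<^esub> y) \<and>
     continuous_map T T (\<lambda>x. inv\<^bsub>G\<^esub> x) \<and>
     t1_space T \<and> completely_regular_space T"

definition rothberger_bounded :: "('g, 'm) monoid_scheme \<Rightarrow> 'g topology \<Rightarrow> 'g set \<Rightarrow> bool" where
  "rothberger_bounded G T X \<longleftrightarrow>
     X \<subseteq> carrier G \<and>
     (\<forall>U :: nat \<Rightarrow> 'g set. (\<forall>n. openin T (U n) \<and> \<one>\<^bsub>G\<^esub> \<in> U n) \<longrightarrow>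
        (\<exists>g :: nat \<Rightarrow> 'g. (\<forall>n. g n \<in> carrier G) \<and> X \<subseteq> (\<Union>n. g n <#\<^bsub>G\<^esub> U n)))"

text \<open>KH(kappa, aleph_1), where kappa = |K|: a family F of subsets of K with |F| > |K|
such that for every infinite A \<subseteq> K with |A| < aleph_1 (i.e. countably infinite),
|{X \<inter> A. X \<in> F}| \<le> |A|.\<close>
definition KH_aleph1 :: "'i set \<Rightarrow> bool" where
  "KH_aleph1 K \<longleftrightarrow>
     (\<exists>F. F \<subseteq> Pow K \<and> card_of K <o card_of F \<and>
        (\<forall>A. A \<subseteq> K \<and> infinite A \<and> countable A \<longrightarrow>
             card_of ((\<lambda>X. X \<inter> A) ` F) \<le>o card_of A))"

end

(*
  Fix a non-identity a i in every factor and a (K, aleph_1) Kurepa family F of size kappa^+.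
  Let H consist of the functions f with f i = a i [^] k t, where t is the set of members of a
  finite S \<subseteq> F that contain i.  H is a subgroup of size |F| = kappa^+.  A sequence of
  neighbourhoods of the identity in the product constrains only a countable set A of coordinates,
  and on A an element of H is determined by finitely many traces X \<inter> A together with finitely many
  integers.  By the Kurepa property F has only countably many traces on A, so the restrictions
  of H to A form a countable set; enumerating it yields translates of the neighbourhoods that
  cover H.
*)

theory Submission
  imports Defs
    "HOL-Algebra.Free_Abelian_Groups" (* for its import of HOL-Cardinals *)
    "HOL-Library.Countable_Set_Type"
begin

text \<open>The exponent at a coordinate i depends only on the atom containing i of the Boolean algebra
  generated by a finite subfamily S of F.\<close>

definition atom_powers ::
    "'i set \<Rightarrow> ('i \<Rightarrow> ('g, 'm) monoid_scheme) \<Rightarrow> ('i \<Rightarrow> 'g) \<Rightarrow> 'i set set \<Rightarrow> ('i \<Rightarrow> 'g) set" where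
  "atom_powers K G a F =
     {\<lambda>i\<in>K. a i [^]\<^bsub>G i\<^esub> k {X \<in> S. i \<in> X} | S (k :: 'i set set \<Rightarrow> int). finite S \<and> S \<subseteq> F}"

lemma atom_powersI:
  "finite S \<Longrightarrow> S \<subseteq> F \<Longrightarrow> (\<lambda>i\<in>K. a i [^]\<^bsub>G i\<^esub> (k :: 'i set set \<Rightarrow> int) {X \<in> S. i \<in> X}) \<in> atom_powers K G a F"
  unfolding atom_powers_def by blast

lemma atom_powersE:
  assumes "f \<in> atom_powers K G a F"
  obtains S and k :: "'i set set \<Rightarrow> int"
  where "finite S" "S \<subseteq> F" "f = (\<lambda>i\<in>K. a i [^]\<^bsub>G i\<^esub> k {X \<in> S. i \<in> X})"
  using assms unfolding atom_powers_def by blast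

lemma subgroup_atom_powers:
  fixes K :: "'i set"
  assumes grp: "\<And>i. i \<in> K \<Longrightarrow> group (G i)" and a: "\<And>i. i \<in> K \<Longrightarrow> a i \<in> carrier (G i)"
  shows "subgroup (atom_powers K G a F) (product_group K G)"
proof (rule group.subgroupI)
  show "group (product_group K G)" using grp by simp
  show "atom_powers K G a F \<subseteq> carrier (product_group K G)"
  proof
    fix f assume "f \<in> atom_powers K G a F"
    then show "f \<in> carrier (product_group K G)"
      by (rule atom_powersE) (use grp a in \<open>auto intro: group.int_pow_closed\<close>)
  qed
  show "atom_powers K G a F \<noteq> {}"
    using atom_powersI[where S = "{}" and k = "\<lambda>_. 0"] by blast
next
  fix f assume "f \<in> atom_powers K G a F"
  then obtain S and k :: "'i set set \<Rightarrow> int"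
    where S: "finite S" "S \<subseteq> F" and f: "f = (\<lambda>i\<in>K. a i [^]\<^bsub>G i\<^esub> k {X \<in> S. i \<in> X})"
    by (rule atom_powersE)
  have "inv\<^bsub>product_group K G\<^esub> f = (\<lambda>i\<in>K. inv\<^bsub>G i\<^esub> (a i [^]\<^bsub>G i\<^esub> k {X \<in> S. i \<in> X}))"
    unfolding f using grp a by (subst inv_product_group) (auto intro: group.int_pow_closed)
  also have "\<dots> = (\<lambda>i\<in>K. a i [^]\<^bsub>G i\<^esub> (- k {X \<in> S. i \<in> X}))"
    using grp a by (intro restrict_ext) (simp add: group.int_pow_neg)
  finally have "inv\<^bsub>product_group K G\<^esub> f = (\<lambda>i\<in>K. a i [^]\<^bsub>G i\<^esub> (- k {X \<in> S. i \<in> X}))" .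
  then show "inv\<^bsub>product_group K G\<^esub> f \<in> atom_powers K G a F"
    using atom_powersI[OF S, where k = "\<lambda>\<tau>. - k \<tau>"] by simp
next
  fix f g assume "f \<in> atom_powers K G a F" and "g \<in> atom_powers K G a F"
  obtain S and k :: "'i set set \<Rightarrow> int"
    where S: "finite S" "S \<subseteq> F" and f: "f = (\<lambda>i\<in>K. a i [^]\<^bsub>G i\<^esub> k {X \<in> S. i \<in> X})"
    using \<open>f \<in> atom_powers K G a F\<close> by (rule atom_powersE)
  obtain S' and k' :: "'i set set \<Rightarrow> int"
    where S': "finite S'" "S' \<subseteq> F" and g: "g = (\<lambda>i\<in>K. a i [^]\<^bsub>G i\<^esub> k' {X \<in> S'. i \<in> X})"
    using \<open>g \<in> atom_powers K G a F\<close> by (rule atom_powersE)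
  define k'' where "k'' = (\<lambda>\<tau>. k (\<tau> \<inter> S) + k' (\<tau> \<inter> S'))"
  have "{X \<in> S \<union> S'. i \<in> X} \<inter> S = {X \<in> S. i \<in> X}" "{X \<in> S \<union> S'. i \<in> X} \<inter> S' = {X \<in> S'. i \<in> X}"
    for i by auto
  then have "k'' {X \<in> S \<union> S'. i \<in> X} = k {X \<in> S. i \<in> X} + k' {X \<in> S'. i \<in> X}" for i
    by (simp add: k''_def)
  then have "f \<otimes>\<^bsub>product_group K G\<^esub> g = (\<lambda>i\<in>K. a i [^]\<^bsub>G i\<^esub> k'' {X \<in> S \<union> S'. i \<in> X})"
    unfolding f g mult_product_group using grp a by (intro restrict_ext) (simp add: group.int_pow_mult)
  also have "\<dots> \<in> atom_powers K G a F"
    by (rule atom_powersI) (use S S' in auto)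
  finally show "f \<otimes>\<^bsub>product_group K G\<^esub> g \<in> atom_powers K G a F" .
qed

lemma restrict_atom_powers_subset:
  fixes K :: "'i set"
  assumes "A \<subseteq> K"
  shows "(\<lambda>f. restrict f A) ` atom_powers K G a F \<subseteq> atom_powers A G a ((\<lambda>X. X \<inter> A) ` F)"
proof
  fix h assume "h \<in> (\<lambda>f. restrict f A) ` atom_powers K G a F"
  then obtain S and k :: "'i set set \<Rightarrow> int"
    where S: "finite S" "S \<subseteq> F" and h: "h = restrict (\<lambda>i\<in>K. a i [^]\<^bsub>G i\<^esub> k {X \<in> S. i \<in> X}) A"
    by (auto elim: atom_powersE)
  define S\<^sub>A where "S\<^sub>A = (\<lambda>X. X \<inter> A) ` S"
  define k\<^sub>A where "k\<^sub>A = (\<lambda>\<tau>. k {X \<in> S. X \<inter> A \<in> \<tau>})"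
  have "{X \<in> S. X \<inter> A \<in> {Y \<in> S\<^sub>A. i \<in> Y}} = {X \<in> S. i \<in> X}" if "i \<in> A" for i
    using that unfolding S\<^sub>A_def by auto
  then have "h = (\<lambda>i\<in>A. a i [^]\<^bsub>G i\<^esub> k\<^sub>A {Y \<in> S\<^sub>A. i \<in> Y})"
    unfolding h k\<^sub>A_def using assms by (intro ext) auto
  also have "\<dots> \<in> atom_powers A G a ((\<lambda>X. X \<inter> A) ` F)"
    by (rule atom_powersI) (use S in \<open>auto simp: S\<^sub>A_def\<close>)
  finally show "h \<in> atom_powers A G a ((\<lambda>X. X \<inter> A) ` F)" .
qed

lemma atom_powers_subset_image_SIGMA:
  fixes K :: "'i set"
  shows "atom_powers K G a F \<subseteq>
    (\<lambda>(S, k). \<lambda>i\<in>K. a i [^]\<^bsub>G i\<^esub> k {X \<in> S. i \<in> X}) ` (SIGMA S:Fpow F. Pow S \<rightarrow>\<^sub>E (UNIV :: int set))"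
proof
  fix f assume "f \<in> atom_powers K G a F"
  then obtain S and k :: "'i set set \<Rightarrow> int"
    where S: "finite S" "S \<subseteq> F" and f: "f = (\<lambda>i\<in>K. a i [^]\<^bsub>G i\<^esub> k {X \<in> S. i \<in> X})"
    by (rule atom_powersE)
  have "f = (\<lambda>(S, k). \<lambda>i\<in>K. a i [^]\<^bsub>G i\<^esub> k {X \<in> S. i \<in> X}) (S, restrict k (Pow S))"
    unfolding f by (intro ext) auto
  moreover have "(S, restrict k (Pow S)) \<in> (SIGMA S:Fpow F. Pow S \<rightarrow>\<^sub>E (UNIV :: int set))"
    using S by (simp add: Fpow_def)
  ultimately show "f \<in> (\<lambda>(S, k). \<lambda>i\<in>K. a i [^]\<^bsub>G i\<^esub> k {X \<in> S. i \<in> X}) `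
      (SIGMA S:Fpow F. Pow S \<rightarrow>\<^sub>E (UNIV :: int set))" by blast
qed

lemma countable_atom_powers:
  assumes "countable F"
  shows "countable (atom_powers K G a F)"
proof (rule countable_subset[OF atom_powers_subset_image_SIGMA], intro countable_image countable_SIGMA)
  show "countable (Fpow F)"
    using countable_Collect_finite_subset[OF assms] by (simp add: Fpow_def conj_commute)
qed (auto intro: countable_PiE simp: Fpow_def)

lemma card_of_atom_powers_le:
  assumes "infinite F"
  shows "|atom_powers K G a F| \<le>o |F|"
proof -
  have "|SIGMA S:Fpow F. Pow S \<rightarrow>\<^sub>E (UNIV :: int set)| \<le>o |F|"
  proof (rule card_of_Sigma_ordLeq_infinite[OF assms])
    show "|Fpow F| \<le>o |F|"
      using card_of_Fpow_infinite[OF assms] ordIso_iff_ordLeq by blast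
    have "countable (Pow S \<rightarrow>\<^sub>E (UNIV :: int set))" if "S \<in> Fpow F" for S
      using that by (auto intro: countable_PiE simp: Fpow_def)
    then show "\<forall>S\<in>Fpow F. |Pow S \<rightarrow>\<^sub>E (UNIV :: int set)| \<le>o |F|"
      using assms countable_card_of_nat infinite_iff_card_of_nat ordLeq_transitive by blast
  qed
  then have "|(\<lambda>(S, k). \<lambda>i\<in>K. a i [^]\<^bsub>G i\<^esub> k {X \<in> S. i \<in> X}) `
      (SIGMA S:Fpow F. Pow S \<rightarrow>\<^sub>E (UNIV :: int set))| \<le>o |F|"
    by (rule ordLeq_transitive[OF card_of_image])
  then show ?thesis
    by (rule ordLeq_transitive[OF card_of_mono1[OF atom_powers_subset_image_SIGMA]])
qed

lemma card_of_atom_powers_ge: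
  assumes grp: "\<And>i. i \<in> K \<Longrightarrow> group (G i)"
    and a: "\<And>i. i \<in> K \<Longrightarrow> a i \<in> carrier (G i) - {\<one>\<^bsub>G i\<^esub>}"
    and F: "F \<subseteq> Pow K"
  shows "|F| \<le>o |atom_powers K G a F|"
proof -
  define x where
    "x X = (\<lambda>i\<in>K. a i [^]\<^bsub>G i\<^esub> (\<lambda>\<tau>. if X \<in> \<tau> then 1 else 0 :: int) {Y \<in> {X}. i \<in> Y})" for X
  have x_apply: "x X i = (if i \<in> X then a i else \<one>\<^bsub>G i\<^esub>)" if "i \<in> K" for X i
    using that grp a by (simp add: x_def group.int_pow_1)
  have "inj_on x F"
  proof (rule inj_onI)
    fix X Y assume "X \<in> F" "Y \<in> F" "x X = x Y"
    then have "i \<in> X \<longleftrightarrow> i \<in> Y" if "i \<in> K" for i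
      using x_apply[OF that, of X] x_apply[OF that, of Y] a[OF that] by (auto split: if_splits)
    then show "X = Y" using \<open>X \<in> F\<close> \<open>Y \<in> F\<close> F by blast
  qed
  moreover have "x X \<in> atom_powers K G a F" if "X \<in> F" for X
    using atom_powersI[where S = "{X}" and k = "\<lambda>\<tau>. if X \<in> \<tau> then 1 else 0"] that
    unfolding x_def by simp
  ultimately show ?thesis
    using card_of_ordLeq[of F "atom_powers K G a F"] by blast
qed

lemma card_of_atom_powers:
  assumes "\<And>i. i \<in> K \<Longrightarrow> group (G i)"
    and "\<And>i. i \<in> K \<Longrightarrow> a i \<in> carrier (G i) - {\<one>\<^bsub>G i\<^esub>}"
    and "F \<subseteq> Pow K" and "infinite F"
  shows "|atom_powers K G a F| =o |F|"
  using card_of_atom_powers_le[OF assms(4)] card_of_atom_powers_ge[OF assms(1-3)]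
  by (simp add: ordIso_iff_ordLeq)

lemma product_group_mem_l_coset:
  assumes grp: "\<And>i. i \<in> K \<Longrightarrow> group (G i)"
    and f: "f \<in> carrier (product_group K G)" and g: "g \<in> carrier (product_group K G)"
    and agree: "\<And>i. i \<in> A \<Longrightarrow> f i = g i"
    and one: "\<And>i. i \<in> K \<Longrightarrow> \<one>\<^bsub>G i\<^esub> \<in> V i"
    and full: "\<And>i. i \<in> K - A \<Longrightarrow> V i = carrier (G i)"
    and U: "Pi\<^sub>E K V \<subseteq> U"
  shows "f \<in> g <#\<^bsub>product_group K G\<^esub> U"
proof -
  interpret P: group "product_group K G" using grp by simp
  define h where "h = inv\<^bsub>product_group K G\<^esub> g \<otimes>\<^bsub>product_group K G\<^esub> f"
  have h_apply: "h i = inv\<^bsub>G i\<^esub> g i \<otimes>\<^bsub>G i\<^esub> f i" if "i \<in> K" for i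
    using that g grp by (simp add: h_def)
  have "h i \<in> V i" if "i \<in> K" for i
  proof (cases "i \<in> A")
    case True
    moreover have "g i \<in> carrier (G i)" using g that by auto
    ultimately show ?thesis using that grp one by (simp add: h_apply agree group.l_inv)
  next
    case False
    moreover have "f i \<in> carrier (G i)" "g i \<in> carrier (G i)" using f g that by auto
    ultimately show ?thesis
      using that full group.inv_closed[OF grp] monoid.m_closed[OF group.is_monoid[OF grp]]
      by (simp add: h_apply)
  qed
  moreover have "h \<in> extensional K" using f g by (simp add: h_def)
  ultimately have "h \<in> Pi\<^sub>E K V" by (simp add: PiE_iff)
  with U have "h \<in> U" by blast
  moreover have "f = g \<otimes>\<^bsub>product_group K G\<^esub> h"
    using f g by (simp add: h_def P.m_assoc[symmetric] del: mult_product_group carrier_product_group one_product_group)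
  ultimately show ?thesis unfolding l_coset_def by blast
qed

lemma rothberger_bounded_product_group:
  fixes K :: "'i set" and H :: "('i \<Rightarrow> 'g) set"
  assumes grp: "\<And>i. i \<in> K \<Longrightarrow> group (G i)"
    and top: "\<And>i. i \<in> K \<Longrightarrow> topspace (T i) = carrier (G i)"
    and H: "H \<subseteq> carrier (product_group K G)"
    and countable_restrictions: "\<And>A. A \<subseteq> K \<Longrightarrow> countable A \<Longrightarrow> countable ((\<lambda>f. restrict f A) ` H)"
  shows "rothberger_bounded (product_group K G) (product_topology T K) H"
  unfolding rothberger_bounded_def
proof (intro conjI allI impI H)
  let ?P = "product_group K G"
  fix U :: "nat \<Rightarrow> ('i \<Rightarrow> 'g) set"
  assume U: "\<forall>n. openin (product_topology T K) (U n) \<and> \<one>\<^bsub>?P\<^esub> \<in> U n"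
  have "\<forall>n. \<exists>V. finite {i \<in> K. V i \<noteq> topspace (T i)} \<and> \<one>\<^bsub>?P\<^esub> \<in> Pi\<^sub>E K V \<and> Pi\<^sub>E K V \<subseteq> U n"
  proof
    fix n
    have "openin (product_topology T K) (U n)" "\<one>\<^bsub>?P\<^esub> \<in> U n" using U by auto
    then show "\<exists>V. finite {i \<in> K. V i \<noteq> topspace (T i)} \<and> \<one>\<^bsub>?P\<^esub> \<in> Pi\<^sub>E K V \<and> Pi\<^sub>E K V \<subseteq> U n"
      unfolding openin_product_topology_alt by blast
  qed
  from choice[OF this] obtain V where V_finite: "\<And>n. finite {i \<in> K. V n i \<noteq> topspace (T i)}"
    and V_one: "\<And>n. \<one>\<^bsub>?P\<^esub> \<in> Pi\<^sub>E K (V n)" and V_U: "\<And>n. Pi\<^sub>E K (V n) \<subseteq> U n"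
    by blast
  define A where "A = (\<Union>n. {i \<in> K. V n i \<noteq> topspace (T i)})"
  have "A \<subseteq> K" unfolding A_def by blast
  moreover have "countable A" unfolding A_def using V_finite countable_finite by blast
  ultimately have R: "countable ((\<lambda>f. restrict f A) ` H)"
    by (rule countable_restrictions)
  show "\<exists>g. (\<forall>n. g n \<in> carrier ?P) \<and> H \<subseteq> (\<Union>n. g n <#\<^bsub>?P\<^esub> U n)"
  proof (cases "H = {}")
    case True
    show ?thesis
      using True grp by (intro exI[of _ "\<lambda>_. \<one>\<^bsub>?P\<^esub>"]) (simp add: group.is_monoid)
  next
    case False
    define e where "e = from_nat_into ((\<lambda>f. restrict f A) ` H)"
    have "\<forall>n. \<exists>h. h \<in> H \<and> restrict h A = e n"
    proof
      fix n
      have "e n \<in> (\<lambda>f. restrict f A) ` H" unfolding e_def using False by (simp add: from_nat_into)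
      then obtain h where "h \<in> H" "e n = restrict h A" by (rule imageE)
      then show "\<exists>h. h \<in> H \<and> restrict h A = e n" by (intro exI[of _ h]) simp
    qed
    from choice[OF this] obtain g where g: "\<forall>n. g n \<in> H \<and> restrict (g n) A = e n" ..
    have "f \<in> (\<Union>n. g n <#\<^bsub>?P\<^esub> U n)" if f: "f \<in> H" for f
    proof -
      have "\<exists>n. e n = restrict f A"
        using from_nat_into_surj[OF R imageI[OF f]] unfolding e_def .
      then obtain n where n: "e n = restrict f A" ..
      have "f \<in> g n <#\<^bsub>?P\<^esub> U n"
      proof (rule product_group_mem_l_coset[where V = "V n"])
        show "f \<in> carrier ?P" "g n \<in> carrier ?P" using f g H by (auto dest: subsetD)
        show "f i = g n i" if "i \<in> A" for i
        proof -
          have "restrict f A i = restrict (g n) A i" using n g by simp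
          then show ?thesis using that by simp
        qed
        show "\<one>\<^bsub>G i\<^esub> \<in> V n i" if "i \<in> K" for i
          using that V_one[of n] by auto
        show "V n i = carrier (G i)" if "i \<in> K - A" for i
        proof -
          have "V n i = topspace (T i)" using that unfolding A_def by blast
          then show ?thesis using that top by simp
        qed
      qed (use grp V_U in auto)
      then show ?thesis by blast
    qed
    moreover have "\<forall>n. g n \<in> carrier ?P" using g H by (auto dest: subsetD)
    ultimately show ?thesis by (intro exI[of _ g]) blast
  qed
qed

lemma obtain_subset_card_of_cardSuc:
  assumes "|K| <o |F|"
  obtains F' where "F' \<subseteq> F" and "|F'| =o cardSuc |K|"
proof -
  define S where "S = Field (cardSuc (card_of K))"
  have S: "|S| =o cardSuc |K|"
    unfolding S_def by (simp add: card_of_Field_ordIso cardSuc_Card_order card_of_Card_order)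
  have "cardSuc |K| \<le>o |F|"
    using assms by (simp add: cardSuc_least card_of_Card_order)
  then have "|S| \<le>o |F|"
    by (rule ordIso_ordLeq_trans[OF S])
  then obtain j where j: "inj_on j S" "j ` S \<subseteq> F"
    unfolding card_of_ordLeq[symmetric] by blast
  have "|j ` S| =o cardSuc |K|"
    using card_of_ordIsoI[OF inj_on_imp_bij_betw[OF j(1)]] S
    by (rule ordIso_transitive[OF ordIso_symmetric])
  with j(2) show ?thesis by (rule that)
qed

lemma KH_aleph1_countable_traces:
  fixes K :: "'i set"
  assumes KH: "KH_aleph1 K" and "infinite K"
  obtains F where "F \<subseteq> Pow K" and "|F| =o cardSuc |K|"
    and "\<And>A. A \<subseteq> K \<Longrightarrow> countable A \<Longrightarrow> countable ((\<lambda>X. X \<inter> A) ` F)"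
proof -
  obtain F\<^sub>0 where F\<^sub>0: "F\<^sub>0 \<subseteq> Pow K" "|K| <o |F\<^sub>0|"
    and traces: "\<And>A. A \<subseteq> K \<Longrightarrow> infinite A \<Longrightarrow> countable A \<Longrightarrow> |(\<lambda>X. X \<inter> A) ` F\<^sub>0| \<le>o |A|"
    using KH unfolding KH_aleph1_def by (elim exE conjE) auto
  obtain F where F: "F \<subseteq> F\<^sub>0" "|F| =o cardSuc |K|"
    using obtain_subset_card_of_cardSuc[OF F\<^sub>0(2)] .
  have "countable ((\<lambda>X. X \<inter> A) ` F)" if A: "A \<subseteq> K" "countable A" for A
  proof -
    \<comment> \<open>The Kurepa property only speaks about infinite sets, so first enlarge A.\<close>
    obtain c :: "nat \<Rightarrow> 'i" where c: "inj c" "range c \<subseteq> K"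
      using infinite_countable_subset[OF \<open>infinite K\<close>] by blast
    define A' where "A' = A \<union> range c"
    have A': "A' \<subseteq> K" "infinite A'" "countable A'"
      unfolding A'_def using A c range_inj_infinite[OF c(1)] by auto
    have "|(\<lambda>X. X \<inter> A') ` F| \<le>o |(\<lambda>X. X \<inter> A') ` F\<^sub>0|"
      using F(1) by (intro card_of_mono1 image_mono)
    also have "|(\<lambda>X. X \<inter> A') ` F\<^sub>0| \<le>o |A'|"
      by (rule traces[OF A'])
    also have "|A'| \<le>o |UNIV :: nat set|"
      using A'(3) by (simp only: countable_card_of_nat)
    finally have "countable ((\<lambda>X. X \<inter> A') ` F)"
      by (simp only: countable_card_of_nat)
    then have "countable ((\<lambda>Y. Y \<inter> A) ` (\<lambda>X. X \<inter> A') ` F)"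
      by (rule countable_image)
    moreover have "(\<lambda>Y. Y \<inter> A) ` (\<lambda>X. X \<inter> A') ` F = (\<lambda>X. X \<inter> A) ` F"
      unfolding A'_def image_image by (intro image_cong) auto
    ultimately show ?thesis by simp
  qed
  moreover have "F \<subseteq> Pow K" using F(1) F\<^sub>0(1) by (rule order_trans)
  ultimately show ?thesis using F(2) that by blast
qed

theorem theorem9:
  fixes K :: "'i set"
    and G :: "'i \<Rightarrow> ('g, 'm) monoid_scheme"
    and T :: "'i \<Rightarrow> 'g topology"
  assumes "uncountable K"
    and "\<forall>i\<in>K. topological_group (G i) (T i)"
    and "\<forall>i\<in>K. \<exists>x\<in>carrier (G i). \<exists>y\<in>carrier (G i). x \<noteq> y"
    and "KH_aleph1 K"
  shows "\<exists>H. subgroup H (product_group K G) \<and>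
             rothberger_bounded (product_group K G) (product_topology T K) H \<and>
             card_of H =o cardSuc (card_of K)"
proof -
  have grp: "\<And>i. i \<in> K \<Longrightarrow> group (G i)" and top: "\<And>i. i \<in> K \<Longrightarrow> topspace (T i) = carrier (G i)"
    using assms(2) by (simp_all add: topological_group_def)
  have "\<forall>i\<in>K. \<exists>b. b \<in> carrier (G i) - {\<one>\<^bsub>G i\<^esub>}"
    using assms(3) by blast
  then obtain a where a: "\<And>i. i \<in> K \<Longrightarrow> a i \<in> carrier (G i) - {\<one>\<^bsub>G i\<^esub>}"
    by metis
  have "infinite K" using assms(1) countable_finite by blast
  then obtain F where F: "F \<subseteq> Pow K" "|F| =o cardSuc |K|"
    and traces: "\<And>A. A \<subseteq> K \<Longrightarrow> countable A \<Longrightarrow> countable ((\<lambda>X. X \<inter> A) ` F)"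
    using KH_aleph1_countable_traces[OF assms(4)] by metis
  have "infinite F"
    using F(2) \<open>infinite K\<close> card_of_ordLeq_finite cardSuc_greater[OF card_of_Card_order]
      ordLess_ordIso_trans ordIso_symmetric ordLess_imp_ordLeq by metis
  let ?H = "atom_powers K G a F"
  have subgroup: "subgroup ?H (product_group K G)"
    using grp a by (intro subgroup_atom_powers) auto
  have "rothberger_bounded (product_group K G) (product_topology T K) ?H"
  proof (rule rothberger_bounded_product_group[OF grp top subgroup.subset[OF subgroup]])
    fix A assume "A \<subseteq> K" "countable A"
    then show "countable ((\<lambda>f. restrict f A) ` ?H)"
      using restrict_atom_powers_subset countable_atom_powers traces countable_subset by metis
  qed
  moreover have "|?H| =o cardSuc |K|"
    using card_of_atom_powers[OF grp a F(1) \<open>infinite F\<close>] F(2) by (rule ordIso_transitive)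
  ultimately show ?thesis using subgroup by blast
qed

end
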